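(* There exists $n_0$ such that for every $n\ge n_0$, the complete bipartite graph $K_{n,n}$ has no intersection representation in $\mathbb R^3$ by homothetic tetrahedra, i.e. there is no family of closed tetrahedra $\{\lambda_v P+w_v\}_{v\in V(K_{n,n})}$ (for a fixed tetrahedron $P\subset\mathbb R^3$, $\lambda_v>0$, $w_v\in\mathbb R^3$) such that for distinct vertices $u,v$ the tetrahedra of $u$ and $v$ intersect if and only if $uv$ is an edge of $K_{n,n}$. *)

theory Defs
  imports "HOL-Analysis.Analysis"
begin

definition tetrahedron :: "(real^3) set \<Rightarrow> bool" where
  "tetrahedron P \<longleftrightarrow> (\<exists>a b c d. card {a, b, c, d} = 4 \<and> \<not> affine_dependent {a, b, c, d}
                          \<and> P = convex hull {a, b, c, d})"

definition homothet :: "real \<Rightarrow> real^3 \<Rightarrow> (real^3) set \<Rightarrow> (real^3) set" where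
  "homothet lam w P = (\<lambda>x. lam *\<^sub>R x + w) ` P"

definition Knn_vertices :: "nat \<Rightarrow> (nat + nat) set" where
  "Knn_vertices n = {0..<n} <+> {0..<n}"

definition Knn_edge :: "(nat + nat) \<Rightarrow> (nat + nat) \<Rightarrow> bool" where
  "Knn_edge u v \<longleftrightarrow> (isl u \<and> \<not> isl v) \<or> (\<not> isl u \<and> isl v)"

definition homothetic_rep ::
  "'v set \<Rightarrow> ('v \<Rightarrow> 'v \<Rightarrow> bool) \<Rightarrow> (real^3) set \<Rightarrow> ('v \<Rightarrow> real) \<Rightarrow> ('v \<Rightarrow> real^3) \<Rightarrow> bool" where
  "homothetic_rep V E P lam w \<longleftrightarrow>
     (\<forall>v\<in>V. lam v > 0) \<and>
     (\<forall>u\<in>V. \<forall>v\<in>V. u \<noteq> v \<longrightarrow>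
        (homothet (lam u) (w u) P \<inter> homothet (lam v) (w v) P \<noteq> {} \<longleftrightarrow> E u v))"

end

theory Submission
  imports Defs
begin

(* A linear change of coordinates turns the tetrahedron into the corner simplex
   {z. z >= 0, z1 + z2 + z3 <= 1}, and each positive homothet into a set
   {z. z >= u, z1 + z2 + z3 <= h} given by four real parameters u1, u2, u3, h; two such sets
   meet iff max(u1,u1') + max(u2,u2') + max(u3,u3') <= min(h,h').
   Splitting at a median once per parameter, K_{n,n} with n >= 2^4 * 2 contains x, x' on one
   side and y, y' on the other such that every parameter separates {x, x'} from {y, y'}.
   For separated pairs max and min obey exchange inequalities, and adding them up shows that
   if the sets of x, y and of x', y' meet, then so do those of x, x' or those of y, y'. *)

definition corner_simplex :: "real^'n \<Rightarrow> real \<Rightarrow> (real^'n) set" where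
  "corner_simplex u h = {z. (\<forall>i. u$i \<le> z$i) \<and> (\<Sum>i\<in>UNIV. z$i) \<le> h}"

lemma corner_simplex_Int_nonempty_iff:
  "corner_simplex u h \<inter> corner_simplex u' h' \<noteq> {} \<longleftrightarrow>
     (\<Sum>i\<in>UNIV. max (u$i) (u'$i)) \<le> min h h'"
proof
  assume "corner_simplex u h \<inter> corner_simplex u' h' \<noteq> {}"
  then obtain z where z: "z \<in> corner_simplex u h" "z \<in> corner_simplex u' h'" by blast
  then have "(\<Sum>i\<in>UNIV. max (u$i) (u'$i)) \<le> (\<Sum>i\<in>UNIV. z$i)"
    by (intro sum_mono) (simp add: corner_simplex_def)
  with z show "(\<Sum>i\<in>UNIV. max (u$i) (u'$i)) \<le> min h h'"
    by (simp add: corner_simplex_def)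
next
  assume "(\<Sum>i\<in>UNIV. max (u$i) (u'$i)) \<le> min h h'"
  then have "(\<chi> i. max (u$i) (u'$i)) \<in> corner_simplex u h \<inter> corner_simplex u' h'"
    by (simp add: corner_simplex_def)
  then show "corner_simplex u h \<inter> corner_simplex u' h' \<noteq> {}" by blast
qed

lemma corner_simplex_homothet:
  fixes u c :: "real^'n"
  assumes "lam > 0"
  shows "(\<lambda>z. lam *\<^sub>R z + c) ` corner_simplex u h =
           corner_simplex (lam *\<^sub>R u + c) (lam * h + (\<Sum>i\<in>UNIV. c$i))"
proof (intro equalityI subsetI)
  fix y assume "y \<in> (\<lambda>z. lam *\<^sub>R z + c) ` corner_simplex u h"
  then obtain z where z: "z \<in> corner_simplex u h" and y: "y = lam *\<^sub>R z + c" by blast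
  have "(\<Sum>i\<in>UNIV. y$i) = lam * (\<Sum>i\<in>UNIV. z$i) + (\<Sum>i\<in>UNIV. c$i)"
    by (simp add: y sum.distrib sum_distrib_left)
  also have "\<dots> \<le> lam * h + (\<Sum>i\<in>UNIV. c$i)"
    using z assms by (simp add: corner_simplex_def)
  finally show "y \<in> corner_simplex (lam *\<^sub>R u + c) (lam * h + (\<Sum>i\<in>UNIV. c$i))"
    using z assms by (simp add: corner_simplex_def y)
next
  fix y assume y: "y \<in> corner_simplex (lam *\<^sub>R u + c) (lam * h + (\<Sum>i\<in>UNIV. c$i))"
  define z where "z = (1 / lam) *\<^sub>R (y - c)"
  have yz: "y = lam *\<^sub>R z + c"
    using assms by (simp add: z_def)
  have "lam * (\<Sum>i\<in>UNIV. z$i) \<le> lam * h"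
    using y by (simp add: corner_simplex_def yz sum.distrib sum_distrib_left)
  then have "z \<in> corner_simplex u h"
    using y assms by (simp add: corner_simplex_def yz)
  with yz show "y \<in> (\<lambda>z. lam *\<^sub>R z + c) ` corner_simplex u h" by blast
qed

lemma homothet_translated_linear_image:
  assumes "linear \<Psi>" and "\<Psi> c = lam *\<^sub>R a + w"
  shows "homothet lam w ((\<lambda>s. a + \<Psi> s) ` S) = \<Psi> ` (\<lambda>z. lam *\<^sub>R z + c) ` S"
  unfolding homothet_def image_image
  using assms by (intro image_cong) (simp_all add: linear_add linear_scale algebra_simps)

definition simplex_frame :: "real^3 \<Rightarrow> real^3 \<Rightarrow> real^3 \<Rightarrow> real^3 \<Rightarrow> real^3" where
  "simplex_frame b c d s = s$1 *\<^sub>R b + s$2 *\<^sub>R c + s$3 *\<^sub>R d"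

lemma linear_simplex_frame: "linear (simplex_frame b c d)"
  unfolding simplex_frame_def by (rule linearI) (simp_all add: algebra_simps)

lemma inj_simplex_frame:
  assumes "independent {b, c, d}" and "distinct [b, c, d]"
  shows "inj (simplex_frame b c d)"
proof (rule linear_injective_0[OF linear_simplex_frame, THEN iffD2], intro allI impI)
  fix s assume s: "simplex_frame b c d s = 0"
  define coeff where "coeff x = (if x = b then s$1 else if x = c then s$2 else s$3)" for x
  have dist: "b \<noteq> c" "b \<noteq> d" "c \<noteq> d"
    using assms(2) by auto
  have "(\<Sum>x\<in>{b, c, d}. coeff x *\<^sub>R x) = 0"
    using s dist by (simp add: coeff_def simplex_frame_def algebra_simps)
  then have "\<forall>x\<in>{b, c, d}. coeff x = 0"
    using assms(1) dependent_finite[of "{b, c, d}"] by blast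
  then show "s = 0"
    using dist by (auto simp: coeff_def vec_eq_iff forall_3)
qed

lemma convex_hull_4_eq_simplex_frame_image:
  fixes a b c d :: "real^3"
  assumes "distinct [a, b, c, d]"
  shows "convex hull {a, b, c, d} =
           (\<lambda>s. a + simplex_frame (b - a) (c - a) (d - a) s) ` corner_simplex 0 1"
proof -
  have dist: "a \<noteq> b" "a \<noteq> c" "a \<noteq> d" "b \<noteq> c" "b \<noteq> d" "c \<noteq> d"
    using assms by auto
  show ?thesis
  proof (intro equalityI subsetI)
    fix y assume "y \<in> convex hull {a, b, c, d}"
    then obtain u where u: "\<forall>x\<in>{a, b, c, d}. 0 \<le> u x" "sum u {a, b, c, d} = 1"
        "(\<Sum>x\<in>{a, b, c, d}. u x *\<^sub>R x) = y"
      by (auto simp: convex_hull_finite)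
    have ua: "u a = 1 - u b - u c - u d" and y: "y = u a *\<^sub>R a + u b *\<^sub>R b + u c *\<^sub>R c + u d *\<^sub>R d"
      using u(2,3) dist by (auto simp: algebra_simps)
    have "(vector [u b, u c, u d] :: real^3) \<in> corner_simplex 0 1"
      using u(1) ua by (simp add: corner_simplex_def forall_3 sum_3)
    moreover have "y = a + simplex_frame (b - a) (c - a) (d - a) (vector [u b, u c, u d])"
      unfolding y ua simplex_frame_def by (simp add: algebra_simps)
    ultimately show "y \<in> (\<lambda>s. a + simplex_frame (b - a) (c - a) (d - a) s) ` corner_simplex 0 1"
      by blast
  next
    fix y assume "y \<in> (\<lambda>s. a + simplex_frame (b - a) (c - a) (d - a) s) ` corner_simplex 0 1"
    then obtain s where s: "s \<in> corner_simplex 0 1"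
      and y: "y = a + simplex_frame (b - a) (c - a) (d - a) s" by blast
    define u where "u x = (if x = a then 1 - s$1 - s$2 - s$3 else if x = b then s$1
                            else if x = c then s$2 else s$3)" for x
    have "\<forall>x\<in>{a, b, c, d}. 0 \<le> u x"
      using s dist by (simp add: u_def corner_simplex_def forall_3 sum_3)
    moreover have "sum u {a, b, c, d} = 1"
      using dist by (simp add: u_def)
    moreover have "(\<Sum>x\<in>{a, b, c, d}. u x *\<^sub>R x) = y"
      using dist by (simp add: u_def y simplex_frame_def algebra_simps)
    ultimately show "y \<in> convex hull {a, b, c, d}"
      by (subst convex_hull_finite) blast+
  qed
qed

lemma tetrahedron_eq_simplex_frame_image:
  assumes "tetrahedron P"
  obtains \<Psi> :: "real^3 \<Rightarrow> real^3" and a where "linear \<Psi>" "inj \<Psi>" "surj \<Psi>"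
    "P = (\<lambda>s. a + \<Psi> s) ` corner_simplex 0 1"
proof -
  obtain a b c d where card: "card {a, b, c, d} = 4" and indep: "\<not> affine_dependent {a, b, c, d}"
    and P: "P = convex hull {a, b, c, d}"
    using assms unfolding tetrahedron_def by blast
  have dist: "distinct [a, b, c, d]"
    using card by (auto simp: card_insert_if split: if_splits)
  have "independent {b - a, c - a, d - a}"
    using indep dist affine_dependent_iff_dependent[of a "{b, c, d}"] by simp
  then have inj: "inj (simplex_frame (b - a) (c - a) (d - a))"
    using dist by (intro inj_simplex_frame) auto
  show thesis
    using linear_simplex_frame inj linear_injective_imp_surjective[OF linear_simplex_frame inj] dist
    by (intro that[of _ a]) (simp_all add: P convex_hull_4_eq_simplex_frame_image)
qed

lemma tetrahedron_homothets_eq_corner_simplices: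
  fixes lam :: "'v \<Rightarrow> real" and w :: "'v \<Rightarrow> real^3"
  assumes "tetrahedron P"
  obtains \<Psi> :: "real^3 \<Rightarrow> real^3" and U :: "'v \<Rightarrow> real^3" and H :: "'v \<Rightarrow> real"
  where "inj \<Psi>" "\<And>v. lam v > 0 \<Longrightarrow> homothet (lam v) (w v) P = \<Psi> ` corner_simplex (U v) (H v)"
proof -
  obtain \<Psi> :: "real^3 \<Rightarrow> real^3" and a where lin: "linear \<Psi>" and inj: "inj \<Psi>" and surj: "surj \<Psi>"
    and P: "P = (\<lambda>s. a + \<Psi> s) ` corner_simplex 0 1"
    by (rule tetrahedron_eq_simplex_frame_image[OF assms])
  define c where "c v = inv \<Psi> (lam v *\<^sub>R a + w v)" for v
  have c: "\<Psi> (c v) = lam v *\<^sub>R a + w v" for v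
    using surj by (simp add: c_def surj_f_inv_f)
  show thesis
  proof (rule that[OF inj])
    fix v assume "lam v > 0"
    then show "homothet (lam v) (w v) P = \<Psi> ` corner_simplex (c v) (lam v + (\<Sum>i\<in>UNIV. c v $ i))"
      by (simp add: P homothet_translated_linear_image[OF lin c] corner_simplex_homothet)
  qed
qed

definition separated :: "('a \<Rightarrow> real) \<Rightarrow> 'a set \<Rightarrow> 'a set \<Rightarrow> bool" where
  "separated f X Y \<longleftrightarrow> (\<forall>x\<in>X. \<forall>y\<in>Y. f x \<le> f y) \<or> (\<forall>x\<in>X. \<forall>y\<in>Y. f y \<le> f x)"

lemma separated_subset: "separated f X Y \<Longrightarrow> X' \<subseteq> X \<Longrightarrow> Y' \<subseteq> Y \<Longrightarrow> separated f X' Y'"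
  unfolding separated_def by blast

lemma max_exchange_separated:
  assumes "separated f {x, x'} {y, y'}"
  shows "max (f x) (f x') + max (f y) (f y') \<le> max (f x) (f y) + max (f x') (f y')"
  using assms unfolding separated_def max_def by auto

lemma min_exchange_separated:
  assumes "separated f {x, x'} {y, y'}"
  shows "min (f x) (f y) + min (f x') (f y') \<le> min (f x) (f x') + min (f y) (f y')"
  using assms unfolding separated_def min_def by auto

lemma corner_simplices_exchange:
  fixes U :: "'a \<Rightarrow> real^'n" and H :: "'a \<Rightarrow> real"
  assumes "\<And>i. separated (\<lambda>v. U v $ i) {x, x'} {y, y'}" and "separated H {x, x'} {y, y'}"
    and "corner_simplex (U x) (H x) \<inter> corner_simplex (U y) (H y) \<noteq> {}"
    and "corner_simplex (U x') (H x') \<inter> corner_simplex (U y') (H y') \<noteq> {}"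
  shows "corner_simplex (U x) (H x) \<inter> corner_simplex (U x') (H x') \<noteq> {} \<or>
         corner_simplex (U y) (H y) \<inter> corner_simplex (U y') (H y') \<noteq> {}"
proof -
  let ?M = "\<lambda>u v. \<Sum>i\<in>UNIV. max (U u $ i) (U v $ i)"
  have "?M x x' + ?M y y' \<le> ?M x y + ?M x' y'"
    unfolding sum.distrib[symmetric]
    by (intro sum_mono max_exchange_separated[of "\<lambda>v. U v $ _"] assms(1))
  also have "\<dots> \<le> min (H x) (H y) + min (H x') (H y')"
    using assms(3,4) unfolding corner_simplex_Int_nonempty_iff by (rule add_mono)
  also have "\<dots> \<le> min (H x) (H x') + min (H y) (H y')"
    using min_exchange_separated[OF assms(2)] .
  finally show ?thesis
    by (simp add: corner_simplex_Int_nonempty_iff) linarith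
qed

lemma median_threshold:
  fixes f :: "'a \<Rightarrow> real"
  assumes fin: "finite X" and card: "2 * m \<le> card X"
  obtains t where "m \<le> card {x\<in>X. f x \<le> t}" and "m \<le> card {x\<in>X. t \<le> f x}"
proof (cases "m = 0")
  case True
  then show thesis by (intro that) simp_all
next
  case False
  define Q where "Q = {s \<in> f ` X. m \<le> card {x\<in>X. f x \<le> s}}"
  have "{x\<in>X. f x \<le> Max (f ` X)} = X"
    using fin by auto
  moreover have "X \<noteq> {}"
    using card False by auto
  ultimately have "Max (f ` X) \<in> Q"
    using fin card by (simp add: Q_def)
  moreover have "finite Q"
    using fin by (simp add: Q_def)
  ultimately have "Q \<noteq> {}" "finite Q" by blast+
  define t where "t = Min Q"
  have t_below: "m \<le> card {x\<in>X. f x \<le> t}"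
    using Min_in[OF \<open>finite Q\<close> \<open>Q \<noteq> {}\<close>] by (simp add: t_def Q_def)
  have strictly_below: "card {x\<in>X. f x < t} < m"
  proof (cases "{x\<in>X. f x < t} = {}")
    case True
    show ?thesis
      unfolding True using \<open>m \<noteq> 0\<close> by simp
  next
    case False
    define s where "s = Max (f ` {x\<in>X. f x < t})"
    have "s \<in> f ` {x\<in>X. f x < t}"
      using fin False by (simp add: s_def)
    then have "s \<in> f ` X" and "s < t" by auto
    then have "s \<notin> Q"
      using Min_le[OF \<open>finite Q\<close>] by (force simp: t_def)
    moreover have "{x\<in>X. f x < t} \<subseteq> {x\<in>X. f x \<le> s}"
      using fin by (auto simp: s_def)
    then have "card {x\<in>X. f x < t} \<le> card {x\<in>X. f x \<le> s}"
      using fin by (intro card_mono) auto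
    ultimately show ?thesis
      using \<open>s \<in> f ` X\<close> by (simp add: Q_def)
  qed
  have "card {x\<in>X. t \<le> f x} = card X - card {x\<in>X. f x < t}"
    using fin by (subst card_Diff_subset[symmetric]) (auto intro: arg_cong[where f = card])
  then have "m \<le> card {x\<in>X. t \<le> f x}"
    using strictly_below card by simp
  with t_below show thesis by (rule that)
qed

lemma exists_separated_halves:
  fixes f :: "'a \<Rightarrow> real"
  assumes "finite X" "finite Y" "2 * m \<le> card X" "2 * m \<le> card Y"
  obtains X' Y' where "X' \<subseteq> X" "Y' \<subseteq> Y" "m \<le> card X'" "m \<le> card Y'" "separated f X' Y'"
proof -
  obtain t where below: "m \<le> card {x\<in>X. f x \<le> t}" and above: "m \<le> card {x\<in>X. t \<le> f x}"
    using median_threshold[OF assms(1,3)] .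
  show thesis
  proof (cases "m \<le> card {y\<in>Y. t \<le> f y}")
    case True
    have "separated f {x\<in>X. f x \<le> t} {y\<in>Y. t \<le> f y}"
      unfolding separated_def by force
    with below True show thesis
      by (intro that) auto
  next
    case False
    have "card {y\<in>Y. f y < t} = card Y - card {y\<in>Y. t \<le> f y}"
      using assms(2) by (subst card_Diff_subset[symmetric]) (auto intro: arg_cong[where f = card])
    then have "m \<le> card {y\<in>Y. f y < t}"
      using False assms(4) by simp
    moreover have "separated f {x\<in>X. t \<le> f x} {y\<in>Y. f y < t}"
      unfolding separated_def by force
    ultimately show thesis
      using above by (intro that) auto
  qed
qed

lemma exists_separated_subsets:
  fixes fs :: "('a \<Rightarrow> real) list"
  assumes "finite X" "finite Y" "2 ^ length fs * m \<le> card X" "2 ^ length fs * m \<le> card Y"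
  shows "\<exists>X'\<subseteq>X. \<exists>Y'\<subseteq>Y. m \<le> card X' \<and> m \<le> card Y' \<and> (\<forall>f\<in>set fs. separated f X' Y')"
  using assms
proof (induction fs arbitrary: X Y)
  case Nil
  then show ?case by auto
next
  case (Cons f fs)
  obtain X1 Y1 where X1: "X1 \<subseteq> X" "Y1 \<subseteq> Y" "2 ^ length fs * m \<le> card X1"
      "2 ^ length fs * m \<le> card Y1" "separated f X1 Y1"
    using exists_separated_halves[of X Y "2 ^ length fs * m" f] Cons.prems by auto
  then obtain X' Y' where "X' \<subseteq> X1" "Y' \<subseteq> Y1" "m \<le> card X'" "m \<le> card Y'"
      "\<forall>g\<in>set fs. separated g X' Y'"
    using Cons.IH[of X1 Y1] Cons.prems(1,2) finite_subset by blast
  with X1 show ?case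
    by (metis separated_subset set_ConsD subset_trans)
qed

lemma homothetic_rep_corner_simplices:
  fixes lam :: "'v \<Rightarrow> real" and w :: "'v \<Rightarrow> real^3"
  assumes "tetrahedron P" and "homothetic_rep V E P lam w"
  shows "\<exists>(U :: 'v \<Rightarrow> real^3) H. \<forall>u\<in>V. \<forall>v\<in>V. u \<noteq> v \<longrightarrow>
           (corner_simplex (U u) (H u) \<inter> corner_simplex (U v) (H v) \<noteq> {} \<longleftrightarrow> E u v)"
proof -
  obtain \<Psi> :: "real^3 \<Rightarrow> real^3" and U H where inj: "inj \<Psi>"
    and hom: "\<And>v. lam v > 0 \<Longrightarrow> homothet (lam v) (w v) P = \<Psi> ` corner_simplex (U v) (H v)"
    using tetrahedron_homothets_eq_corner_simplices[OF assms(1), of lam w] by blast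
  have "corner_simplex (U u) (H u) \<inter> corner_simplex (U v) (H v) \<noteq> {} \<longleftrightarrow> E u v"
    if uv: "u \<in> V" "v \<in> V" "u \<noteq> v" for u v
  proof -
    have "lam u > 0" "lam v > 0"
      using assms(2) uv by (auto simp: homothetic_rep_def)
    then have "homothet (lam u) (w u) P \<inter> homothet (lam v) (w v) P =
        \<Psi> ` (corner_simplex (U u) (H u) \<inter> corner_simplex (U v) (H v))"
      using inj by (simp add: hom image_Int)
    moreover have "homothet (lam u) (w u) P \<inter> homothet (lam v) (w v) P \<noteq> {} \<longleftrightarrow> E u v"
      using assms(2) uv unfolding homothetic_rep_def by blast
    ultimately show ?thesis
      by simp
  qed
  then show ?thesis by blast
qed

lemma Knn_not_corner_simplex_graph:
  fixes U :: "nat + nat \<Rightarrow> real^3" and H :: "nat + nat \<Rightarrow> real"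
  assumes "32 \<le> n"
  shows "\<not> (\<forall>u\<in>Knn_vertices n. \<forall>v\<in>Knn_vertices n. u \<noteq> v \<longrightarrow>
           (corner_simplex (U u) (H u) \<inter> corner_simplex (U v) (H v) \<noteq> {} \<longleftrightarrow> Knn_edge u v))"
proof
  define C where "C v = corner_simplex (U v) (H v)" for v
  assume "\<forall>u\<in>Knn_vertices n. \<forall>v\<in>Knn_vertices n. u \<noteq> v \<longrightarrow>
           (corner_simplex (U u) (H u) \<inter> corner_simplex (U v) (H v) \<noteq> {} \<longleftrightarrow> Knn_edge u v)"
  then have meets_iff_edge: "C u \<inter> C v \<noteq> {} \<longleftrightarrow> Knn_edge u v"
    if "u \<in> Knn_vertices n" "v \<in> Knn_vertices n" "u \<noteq> v" for u v
    using that by (simp add: C_def)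
  define fs where "fs = [\<lambda>v. U v $ 1, \<lambda>v. U v $ 2, \<lambda>v. U v $ 3, H]"
  obtain A B where AB: "A \<subseteq> Inl ` {0..<n}" "B \<subseteq> Inr ` {0..<n}" "2 \<le> card A" "2 \<le> card B"
    and sep: "\<forall>f\<in>set fs. separated f A B"
    using exists_separated_subsets[of "Inl ` {0..<n}" "Inr ` {0..<n}" fs 2] assms
    by (auto simp: fs_def card_image)
  obtain x x' where x: "x \<in> A" "x' \<in> A" "x \<noteq> x'"
    using AB(3) by (metis card_2_iff obtain_subset_with_card_n insert_subset)
  obtain y y' where y: "y \<in> B" "y' \<in> B" "y \<noteq> y'"
    using AB(4) by (metis card_2_iff obtain_subset_with_card_n insert_subset)
  have sep_pairs: "separated f {x, x'} {y, y'}" if "f \<in> set fs" for f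
    by (rule separated_subset[OF sep[rule_format, OF that]]) (use x y in auto)
  have xy: "isl x" "isl x'" "\<not> isl y" "\<not> isl y'" "x \<noteq> y" "x' \<noteq> y'"
    and V: "x \<in> Knn_vertices n" "x' \<in> Knn_vertices n" "y \<in> Knn_vertices n" "y' \<in> Knn_vertices n"
    using AB x y by (auto simp: Knn_vertices_def)
  then have "C x \<inter> C y \<noteq> {}" "C x' \<inter> C y' \<noteq> {}"
    using meets_iff_edge by (simp_all add: Knn_edge_def)
  moreover have "C x \<inter> C x' = {}" "C y \<inter> C y' = {}"
    using meets_iff_edge[of x x'] meets_iff_edge[of y y'] V xy x(3) y(3)
    by (simp_all add: Knn_edge_def)
  moreover have "separated (\<lambda>v. U v $ i) {x, x'} {y, y'}" for i
    using sep_pairs exhaust_3[of i] by (auto simp: fs_def)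
  moreover have "separated H {x, x'} {y, y'}"
    using sep_pairs by (simp add: fs_def)
  ultimately show False
    using corner_simplices_exchange[of U x x' y y' H] unfolding C_def by blast
qed

theorem mainTheorem4:
  shows "\<exists>n0::nat. \<forall>n\<ge>n0. \<forall>P lam w. tetrahedron P \<longrightarrow>
           \<not> homothetic_rep (Knn_vertices n) Knn_edge P lam w"
proof (intro exI[of _ 32] allI impI notI)
  fix n :: nat and P lam w
  assume n: "32 \<le> n" and tet: "tetrahedron P"
    and rep: "homothetic_rep (Knn_vertices n) Knn_edge P lam w"
  show False
    using homothetic_rep_corner_simplices[OF tet rep] Knn_not_corner_simplex_graph[OF n] by blast
qed

end
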